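(* Let $(A_1,\lambda_1)\in\Lambda^*_{2,p}$ and let $(N,\langle\,,\rangle_N)$, $U_{x_1}$, $V_0$ be as in the context. Then the natural group homomorphism $\pi:U_{x_1}\to\mathrm{Aut}(V_0,\langle\,,\rangle)=\mathrm{SL}_2(\mathbb F_{p^2})$ is surjective.
   Context: $k$ is an algebraically closed field of characteristic $p$, $W=W(k)$, $\sigma$ the Frobenius of $W$. $\Lambda^*_{2,p}$ is the set of isomorphism classes of polarized superspecial abelian surfaces $(A_1,\lambda_1)$ over $k$ with $\deg\lambda_1=p^2$ and $\ker\lambda_1\simeq\alpha_p\times\alpha_p$. Let $(M_1,\langle\,,\rangle)$ be the covariant Dieudonné module of $A_1$ with the alternating pairing induced by $\lambda_1$, $N\subset M_1\otimes\mathbb Q$ the Dieudonné module with $VN=M_1$, and $\langle\,,\rangle_N=p\langle\,,\rangle$. $U_{x_1}=\mathrm{Aut}_{\mathcal{DM}}(N,\langle\,,\rangle_N)$ is the group of $W$-linear automorphisms of $N$ commuting with $F,V$ and preserving $\langle\,,\rangle_N$ (it equals $\mathrm{Aut}_{\mathcal{DM}}(M_1,\langle\,,\rangle)$). There is a $W$-basis $e_1,e_2,e_3,e_4$ of $N$ with $Fe_1=e_2$, $Fe_2=-pe_1$, $Fe_3=e_4$, $Fe_4=-pe_3$, $\langle e_1,e_3\rangle_N=-\langle e_3,e_1\rangle_N=1$, $\langle e_2,e_4\rangle_N=-\langle e_4,e_2\rangle_N=p$, and $\langle e_i,e_j\rangle_N=0$ otherwise. Let $\tilde N=\{n\in N:F^2n=-pn\}$,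 the $W(\mathbb F_{p^2})$-span of the $e_i$, and $V_0=\tilde N/V\tilde N=\mathbb F_{p^2}\bar e_1\oplus\mathbb F_{p^2}\bar e_3$, with the non-degenerate alternating pairing $\langle\,,\rangle$ induced by $\langle\,,\rangle_N$. Elements of $U_{x_1}$ preserve $\tilde N$ and $V\tilde N$, giving $\pi$. *)

theory Defs
  imports "HOL-Computational_Algebra.Polynomial"
begin

definition alg_closed_field :: "'k::field itself \<Rightarrow> bool" where
  "alg_closed_field _ \<longleftrightarrow> (\<forall>q :: 'k poly. degree q \<ge> 1 \<longrightarrow> (\<exists>x. poly q x = 0))"

text \<open>W(k) is characterised (up to unique isomorphism) as the strict p-ring with
  residue field k: p is a non-zero-divisor, W is p-adically separated and complete,
  and reduction red : W -> k is a surjective ring homomorphism with kernel pW.\<close>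

definition is_witt_ring :: "nat \<Rightarrow> ('w::comm_ring_1 \<Rightarrow> 'k::field) \<Rightarrow> bool" where
  "is_witt_ring p red \<longleftrightarrow>
     (\<forall>x y. red (x + y) = red x + red y) \<and> (\<forall>x y. red (x * y) = red x * red y) \<and> red 1 = 1 \<and>
     surj red \<and>
     (\<forall>x. red x = 0 \<longleftrightarrow> (\<exists>y. x = of_nat p * y)) \<and>
     (\<forall>x::'w. of_nat p * x = 0 \<longrightarrow> x = 0) \<and>
     (\<forall>x::'w. (\<forall>n. \<exists>y. x = of_nat p ^ n * y) \<longrightarrow> x = 0) \<and>
     (\<forall>a :: nat \<Rightarrow> 'w. (\<forall>n. \<exists>y. a (Suc n) - a n = of_nat p ^ n * y) \<longrightarrow>
        (\<exists>l. \<forall>n. \<exists>y. l - a n = of_nat p ^ n * y))"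

definition is_witt_frobenius :: "nat \<Rightarrow> ('w::comm_ring_1 \<Rightarrow> 'k::field) \<Rightarrow> ('w \<Rightarrow> 'w) \<Rightarrow> bool" where
  "is_witt_frobenius p red \<sigma> \<longleftrightarrow>
     (\<forall>x y. \<sigma> (x + y) = \<sigma> x + \<sigma> y) \<and> (\<forall>x y. \<sigma> (x * y) = \<sigma> x * \<sigma> y) \<and> \<sigma> 1 = 1 \<and>
     (\<forall>x. red (\<sigma> x) = red x ^ p)"

datatype idx = I1 | I2 | I3 | I4

type_synonym 'w vec4 = "idx \<Rightarrow> 'w"
type_synonym 'w mat4 = "idx \<Rightarrow> idx \<Rightarrow> 'w"

definition basis_vec :: "idx \<Rightarrow> 'w::comm_ring_1 vec4" where
  "basis_vec i = (\<lambda>j. if j = i then 1 else 0)"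

definition vsub :: "'w::comm_ring_1 vec4 \<Rightarrow> 'w vec4 \<Rightarrow> 'w vec4" where
  "vsub x y = (\<lambda>i. x i - y i)"

definition mat_vec :: "'w::comm_ring_1 mat4 \<Rightarrow> 'w vec4 \<Rightarrow> 'w vec4" where
  "mat_vec M x = (\<lambda>i. \<Sum>j\<in>{I1,I2,I3,I4}. M i j * x j)"

definition mat_mul :: "'w::comm_ring_1 mat4 \<Rightarrow> 'w mat4 \<Rightarrow> 'w mat4" where
  "mat_mul M M' = (\<lambda>i k. \<Sum>j\<in>{I1,I2,I3,I4}. M i j * M' j k)"

definition mat_id :: "'w::comm_ring_1 mat4" where
  "mat_id = (\<lambda>i j. if i = j then 1 else 0)"

text \<open>F is sigma-semilinear with F e1 = e2, F e2 = -p e1, F e3 = e4, F e4 = -p e3.\<close>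
definition frobF :: "nat \<Rightarrow> ('w::comm_ring_1 \<Rightarrow> 'w) \<Rightarrow> 'w vec4 \<Rightarrow> 'w vec4" where
  "frobF p \<sigma> x = (\<lambda>i. case i of
      I1 \<Rightarrow> - (of_nat p * \<sigma> (x I2))
    | I2 \<Rightarrow> \<sigma> (x I1)
    | I3 \<Rightarrow> - (of_nat p * \<sigma> (x I4))
    | I4 \<Rightarrow> \<sigma> (x I3))"

text \<open>V = p F^{-1}: sigma^{-1}-semilinear with V e1 = -e2, V e2 = p e1, V e3 = -e4, V e4 = p e3.\<close>
definition verV :: "nat \<Rightarrow> ('w::comm_ring_1 \<Rightarrow> 'w) \<Rightarrow> 'w vec4 \<Rightarrow> 'w vec4" where
  "verV p \<sigma> x = (\<lambda>i. case i of
      I1 \<Rightarrow> of_nat p * inv \<sigma> (x I2)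
    | I2 \<Rightarrow> - inv \<sigma> (x I1)
    | I3 \<Rightarrow> of_nat p * inv \<sigma> (x I4)
    | I4 \<Rightarrow> - inv \<sigma> (x I3))"

definition pairN :: "nat \<Rightarrow> 'w::comm_ring_1 vec4 \<Rightarrow> 'w vec4 \<Rightarrow> 'w" where
  "pairN p x y = x I1 * y I3 - x I3 * y I1 + of_nat p * (x I2 * y I4 - x I4 * y I2)"

definition U_grp :: "nat \<Rightarrow> ('w::comm_ring_1 \<Rightarrow> 'w) \<Rightarrow> 'w mat4 set" where
  "U_grp p \<sigma> = {M. (\<exists>M'. mat_mul M M' = mat_id \<and> mat_mul M' M = mat_id) \<and>
      (\<forall>x. mat_vec M (frobF p \<sigma> x) = frobF p \<sigma> (mat_vec M x)) \<and>
      (\<forall>x. mat_vec M (verV p \<sigma> x) = verV p \<sigma> (mat_vec M x)) \<and>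
      (\<forall>x y. pairN p (mat_vec M x) (mat_vec M y) = pairN p x y)}"

definition Ntilde :: "nat \<Rightarrow> ('w::comm_ring_1 \<Rightarrow> 'w) \<Rightarrow> 'w vec4 set" where
  "Ntilde p \<sigma> = {n. frobF p \<sigma> (frobF p \<sigma> n) = (\<lambda>i. - (of_nat p * n i))}"

definition VNtilde :: "nat \<Rightarrow> ('w::comm_ring_1 \<Rightarrow> 'w) \<Rightarrow> 'w vec4 set" where
  "VNtilde p \<sigma> = verV p \<sigma> ` Ntilde p \<sigma>"

text \<open>The class in V0 = Ntilde / V Ntilde of an element y of Ntilde is
  red(y_1) e1bar + red(y_3) e3bar.  pi(M) sends the class of y to the class of M y.
  "pi M has matrix (a b; c d) w.r.t. (e1bar, e3bar)" is expressed as follows.\<close>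
definition pi_has_matrix :: "nat \<Rightarrow> ('w::comm_ring_1 \<Rightarrow> 'w) \<Rightarrow> ('w \<Rightarrow> 'k::field) \<Rightarrow> 'w mat4
    \<Rightarrow> 'k \<Rightarrow> 'k \<Rightarrow> 'k \<Rightarrow> 'k \<Rightarrow> bool" where
  "pi_has_matrix p \<sigma> red M a b c d \<longleftrightarrow>
     (\<exists>y \<in> Ntilde p \<sigma>. vsub (mat_vec M (basis_vec I1)) y \<in> VNtilde p \<sigma> \<and> red (y I1) = a \<and> red (y I3) = c) \<and>
     (\<exists>y \<in> Ntilde p \<sigma>. vsub (mat_vec M (basis_vec I3)) y \<in> VNtilde p \<sigma> \<and> red (y I1) = b \<and> red (y I3) = d)"

definition Fp2 :: "nat \<Rightarrow> 'k::field set" where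
  "Fp2 p = {x. x ^ (p ^ 2) = x}"

text \<open>Aut(V0, <,>): F_{p^2}-linear automorphisms of V0 = F_{p^2} e1bar + F_{p^2} e3bar,
  given by matrices (a b; c d), preserving the induced pairing <u,v> = u1 v3 - u3 v1.\<close>
definition aut_V0 :: "nat \<Rightarrow> 'k::field \<Rightarrow> 'k \<Rightarrow> 'k \<Rightarrow> 'k \<Rightarrow> bool" where
  "aut_V0 p a b c d \<longleftrightarrow> a \<in> Fp2 p \<and> b \<in> Fp2 p \<and> c \<in> Fp2 p \<and> d \<in> Fp2 p \<and>
     a * d - b * c \<noteq> 0 \<and>
     (\<forall>u1 u3 v1 v3. u1 \<in> Fp2 p \<longrightarrow> u3 \<in> Fp2 p \<longrightarrow> v1 \<in> Fp2 p \<longrightarrow> v3 \<in> Fp2 p \<longrightarrow>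
        (a * u1 + b * u3) * (c * v1 + d * v3) - (c * u1 + d * u3) * (a * v1 + b * v3)
          = u1 * v3 - u3 * v1)"

end

theory Submission imports Defs begin

text \<open>
  Teichmuller representatives (the unique
  solutions of t^{p^2} = t over a given residue, p-adic limits of x^{p^{2k}}) lift three entries,
  and the fourth is solved for; this gives (A B; C D) of determinant 1 with entries fixed by sigma^2.
  The matrix acting as (A B; C D) on the span of e1, e3 and as its sigma-conjugate on the span
  of e2 = F e1, e4 = F e3 commutes with F and V because sigma^2 fixes its entries (V involves
  sigma^{-1}, which exists since k is perfect and W is p-adically complete), and it preserves
  the pairing because both blocks have determinant 1. Its columns at e1, e3 lie in Ntilde,
  so pi sends it to the given matrix.
\<close>

locale ring_homomorphism =
  fixes f :: "'a::comm_ring_1 \<Rightarrow> 'b::comm_ring_1"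
  assumes add: "f (x + y) = f x + f y"
    and mult: "f (x * y) = f x * f y"
    and one: "f 1 = 1"
begin

lemma zero: "f 0 = 0"
  using add[of 0 0] by simp

lemma uminus: "f (- x) = - f x"
  using add[of x "- x"] zero by (simp add: eq_neg_iff_add_eq_0 add.commute)

lemma diff: "f (x - y) = f x - f y"
  using add[of x "- y"] uminus by simp

lemma power: "f (x ^ n) = f x ^ n"
  by (induction n) (simp_all add: one mult)

lemma of_nat: "f (of_nat n) = of_nat n"
  by (induction n) (simp_all add: zero one add)

lemma inv_ring_homomorphism:
  assumes "bij f"
  shows "ring_homomorphism (inv f)"
proof
  have f_inv: "f (inv f x) = x" for x
    using assms by (simp add: bij_is_surj surj_f_inv_f)
  have inv_f: "inv f (f x) = x" for x
    using assms by (simp add: bij_is_inj)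
  show "inv f (x + y) = inv f x + inv f y" for x y
    by (metis add f_inv inv_f)
  show "inv f (x * y) = inv f x * inv f y" for x y
    by (metis mult f_inv inv_f)
  show "inv f 1 = 1"
    by (metis one inv_f)
qed

end

lemma diff_dvd_power_diff: "x - y dvd x ^ n - (y::'a::comm_ring_1) ^ n"
  using diff_power_eq_sum[of x "n - 1" y] by (cases n) simp_all

locale strict_p_ring =
  fixes p :: nat and red :: "'w::comm_ring_1 \<Rightarrow> 'k::field"
  assumes prime: "prime p" and witt_ring: "is_witt_ring p red"
begin

sublocale red: ring_homomorphism red
  using witt_ring by unfold_locales (simp_all add: is_witt_ring_def)

lemma red_surj: "surj red"
  using witt_ring by (simp add: is_witt_ring_def)

lemma red_eq_0_iff: "red x = 0 \<longleftrightarrow> of_nat p dvd x"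
  using witt_ring by (auto simp add: is_witt_ring_def dvd_def)

lemma red_eq_iff_dvd_diff: "red x = red y \<longleftrightarrow> of_nat p dvd x - y"
  using red_eq_0_iff[of "x - y"] by (simp add: red.diff)

lemma p_no_zero_divisor: "of_nat p * (x::'w) = 0 \<Longrightarrow> x = 0"
  using witt_ring by (simp add: is_witt_ring_def)

lemma eq_0_if_dvd_all_powers: "(\<And>n. of_nat p ^ n dvd x) \<Longrightarrow> (x::'w) = 0"
  using witt_ring by (auto simp add: is_witt_ring_def dvd_def)

lemma p_adic_limit_exists:
  "(\<And>n. of_nat p ^ n dvd a (Suc n) - a n) \<Longrightarrow> \<exists>l. \<forall>n. of_nat p ^ n dvd l - (a n::'w)"
  using witt_ring unfolding is_witt_ring_def dvd_def by blast

lemma power_p_diff_dvd: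
  assumes "k \<ge> 1" and "of_nat p ^ k dvd u - v"
  shows "of_nat p ^ (k + 1) dvd u ^ p - (v::'w) ^ p"
proof -
  let ?P = "of_nat p :: 'w"
  obtain w where u: "u = ?P ^ k * w + v"
    using assms(2) unfolding dvd_def by (metis diff_eq_eq)
  have "u ^ p = (\<Sum>i\<le>p. of_nat (p choose i) * (?P ^ k * w) ^ i * v ^ (p - i))"
    unfolding u by (rule binomial_ring)
  also have "\<dots> = (\<Sum>i\<in>{1..p}. of_nat (p choose i) * (?P ^ k * w) ^ i * v ^ (p - i)) + v ^ p"
    by (simp add: atMost_atLeast0 sum.atLeast_Suc_atMost add.commute)
  finally have expand:
    "u ^ p - v ^ p = (\<Sum>i\<in>{1..p}. of_nat (p choose i) * (?P ^ k * w) ^ i * v ^ (p - i))"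
    by simp
  have "?P ^ (k + 1) dvd of_nat (p choose i) * (?P ^ k * w) ^ i * v ^ (p - i)" if "i \<in> {1..p}" for i
  proof (cases "i = 1")
    case True
    then show ?thesis
      by (intro dvdI[where k = "w * v ^ (p - 1)"]) (simp add: mult_ac power_add)
  next
    case False
    with that have "k * 2 \<le> k * i"
      by simp
    then have "k + 1 \<le> k * i"
      using \<open>k \<ge> 1\<close> by linarith
    then have "?P ^ (k + 1) dvd ?P ^ (k * i)"
      by (rule le_imp_power_dvd)
    also have "\<dots> dvd (?P ^ k * w) ^ i"
      by (simp add: power_mult_distrib power_mult)
    finally show ?thesis
      by (simp add: mult.assoc)
  qed
  then show ?thesis
    unfolding expand by (intro dvd_sum) auto
qed

lemma power_p_power_diff_dvd:
  assumes "n \<ge> 1" and "k \<ge> 1" and "of_nat p ^ k dvd u - v"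
  shows "of_nat p ^ (k + 1) dvd u ^ p ^ n - (v::'w) ^ p ^ n"
proof -
  have "of_nat p ^ (k + 1) dvd u ^ p - v ^ p"
    using assms(2,3) by (rule power_p_diff_dvd)
  also have "\<dots> dvd (u ^ p) ^ p ^ (n - 1) - (v ^ p) ^ p ^ (n - 1)"
    by (rule diff_dvd_power_diff)
  finally show ?thesis
    using \<open>n \<ge> 1\<close> by (simp add: power_mult[symmetric] power_Suc[symmetric] del: power_Suc)
qed

lemma iterated_power_diff_dvd:
  assumes "n \<ge> 1" and "red s = red t"
  shows "of_nat p ^ Suc k dvd s ^ (p ^ n) ^ k - t ^ (p ^ n) ^ k"
proof (induction k)
  case 0
  then show ?case
    using assms(2) red_eq_iff_dvd_diff by simp
next
  case (Suc k)
  then have "of_nat p ^ (Suc k + 1) dvd (s ^ (p ^ n) ^ k) ^ p ^ n - (t ^ (p ^ n) ^ k) ^ p ^ n"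
    using \<open>n \<ge> 1\<close> by (intro power_p_power_diff_dvd) auto
  then show ?case
    by (simp add: power_mult[symmetric] mult.commute)
qed

lemma power_fixed_point_unique:
  assumes "n \<ge> 1" and "s ^ p ^ n = s" and "t ^ p ^ n = t" and "red s = red t"
  shows "s = t"
proof -
  have "of_nat p ^ k dvd s - t" for k
  proof -
    have "s ^ (p ^ n) ^ k = s" and "t ^ (p ^ n) ^ k = t"
      using assms(2,3) by (induction k) (simp_all add: power_mult)
    then have "of_nat p ^ Suc k dvd s - t"
      using iterated_power_diff_dvd[OF assms(1,4), of k] by simp
    then show ?thesis
      by (rule power_le_dvd) simp
  qed
  then show ?thesis
    using eq_0_if_dvd_all_powers[of "s - t"] by simp
qed

lemma exists_power_fixed_point_lift:
  assumes "n \<ge> 1" and "a ^ p ^ n = a"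
  shows "\<exists>t. t ^ p ^ n = t \<and> red t = a"
proof -
  let ?q = "p ^ n"
  obtain x where x: "red x = a"
    using red_surj by (metis surjD)
  define xs where "xs k = x ^ ?q ^ k" for k
  have xs_Suc: "xs (Suc k) = xs k ^ ?q" for k
    by (simp add: xs_def power_mult[symmetric] mult.commute)
  have "red (x ^ ?q) = red x"
    using x assms(2) by (simp add: red.power)
  then have "of_nat p ^ Suc k dvd xs (Suc k) - xs k" for k
    using iterated_power_diff_dvd[OF assms(1), of "x ^ ?q" x k]
    by (simp add: xs_def power_mult[symmetric] mult.commute)
  then have "of_nat p ^ k dvd xs (Suc k) - xs k" for k
    by (rule power_le_dvd) simp
  then obtain l where l: "\<And>k. of_nat p ^ k dvd l - xs k"
    using p_adic_limit_exists by blast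
  have "of_nat p ^ k dvd l ^ ?q - l" for k
  proof -
    have "of_nat p ^ k dvd l ^ ?q - xs k ^ ?q"
      using l[of k] diff_dvd_power_diff by (rule dvd_trans)
    moreover have "of_nat p ^ k dvd l - xs (Suc k)"
      using l[of "Suc k"] by (rule power_le_dvd) simp
    ultimately have "of_nat p ^ k dvd (l ^ ?q - xs k ^ ?q) - (l - xs (Suc k))"
      by (rule dvd_diff)
    then show ?thesis
      by (simp add: xs_Suc)
  qed
  then have "l ^ ?q = l"
    using eq_0_if_dvd_all_powers[of "l ^ ?q - l"] by simp
  moreover have "red l = a"
    using l[of 1] x assms(2) by (simp add: red_eq_iff_dvd_diff[symmetric] xs_def red.power)
  ultimately show ?thesis
    by blast
qed

definition teichmuller :: "nat \<Rightarrow> 'k \<Rightarrow> 'w" where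
  "teichmuller n a = (SOME t. t ^ p ^ n = t \<and> red t = a)"

lemma
  assumes "n \<ge> 1" and "a ^ p ^ n = a"
  shows teichmuller_power_fixed: "teichmuller n a ^ p ^ n = teichmuller n a"
    and red_teichmuller: "red (teichmuller n a) = a"
  using someI_ex[OF exists_power_fixed_point_lift[OF assms]] by (simp_all add: teichmuller_def)

lemma teichmuller_unique:
  assumes "n \<ge> 1" and "t ^ p ^ n = t"
  shows "teichmuller n (red t) = t"
proof -
  have red_t: "red t ^ p ^ n = red t"
    using assms(2) by (metis red.power)
  show ?thesis
    using power_fixed_point_unique[OF assms(1) teichmuller_power_fixed[OF assms(1) red_t] assms(2)
        red_teichmuller[OF assms(1) red_t]] .
qed

lemma teichmuller_mult:
  assumes "n \<ge> 1" and "a ^ p ^ n = a" and "b ^ p ^ n = b"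
  shows "teichmuller n (a * b) = teichmuller n a * teichmuller n b"
proof -
  let ?s = "teichmuller n a * teichmuller n b"
  have "?s ^ p ^ n = ?s"
    unfolding power_mult_distrib using assms by (simp only: teichmuller_power_fixed)
  with assms(1) have "teichmuller n (red ?s) = ?s"
    by (rule teichmuller_unique)
  then show ?thesis
    using assms by (simp only: red.mult red_teichmuller)
qed

lemma teichmuller_one: "n \<ge> 1 \<Longrightarrow> teichmuller n 1 = 1"
  using teichmuller_unique[of n 1] by (simp add: red.one)

end

locale witt_frobenius = strict_p_ring p red
  for p and red :: "'w::comm_ring_1 \<Rightarrow> 'k::field" +
  fixes \<sigma> :: "'w \<Rightarrow> 'w"
  assumes alg_closed: "alg_closed_field TYPE('k)"
    and frobenius: "is_witt_frobenius p red \<sigma>"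
begin

sublocale sigma: ring_homomorphism \<sigma>
  using frobenius by unfold_locales (simp_all add: is_witt_frobenius_def)

lemma red_sigma: "red (\<sigma> x) = red x ^ p"
  using frobenius by (simp add: is_witt_frobenius_def)

lemma sigma_inj: "inj \<sigma>"
proof -
  have "\<forall>z. \<sigma> z = 0 \<longrightarrow> of_nat p ^ k dvd z" for k
  proof (induction k)
    case 0
    then show ?case by simp
  next
    case (Suc k)
    show ?case
    proof (intro allI impI)
      fix z
      assume z: "\<sigma> z = 0"
      then have "red z ^ p = 0"
        by (metis red_sigma red.zero)
      then obtain y where y: "z = of_nat p * y"
        using red_eq_0_iff by (auto simp: dvd_def)
      with z have "of_nat p * \<sigma> y = 0"
        by (simp add: sigma.mult sigma.of_nat)
      then have "of_nat p ^ k dvd y"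
        using Suc p_no_zero_divisor by blast
      then show "of_nat p ^ Suc k dvd z"
        using y by (simp add: mult_dvd_mono)
    qed
  qed
  then show ?thesis
    by (intro injI) (metis eq_0_if_dvd_all_powers eq_iff_diff_eq_0 sigma.diff)
qed

lemma exists_pth_root: "\<exists>e::'k. e ^ p = c"
proof -
  define q :: "'k poly" where "q = monom 1 p + [:- c:]"
  have "degree q = p"
    unfolding q_def using prime_gt_1_nat[OF prime]
    by (subst degree_add_eq_left) (auto simp: degree_monom_eq)
  then obtain e where "poly q e = 0"
    using alg_closed prime_gt_1_nat[OF prime] unfolding alg_closed_field_def by fastforce
  then show ?thesis
    by (auto simp: q_def poly_monom)
qed

lemma exists_sigma_approximation: "\<exists>x r. z = \<sigma> x + of_nat p * r"
proof -
  obtain e where e: "e ^ p = red z"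
    using exists_pth_root by blast
  obtain x where "red x = e"
    using red_surj by (metis surjD)
  then have "red z = red (\<sigma> x)"
    using e by (simp add: red_sigma)
  then obtain r where "z - \<sigma> x = of_nat p * r"
    using red_eq_iff_dvd_diff by (auto simp: dvd_def)
  then show ?thesis
    by (metis diff_eq_eq add.commute)
qed

text \<open>Approximate y by sigma of the p-adic series assembled from the successive
  approximation digits, and pass to the limit.\<close>

lemma sigma_surj: "surj \<sigma>"
  unfolding surj_def
proof
  fix y
  obtain f g where fg: "\<And>z. z = \<sigma> (f z) + of_nat p * g z"
    using exists_sigma_approximation by metis
  define zs where "zs k = (g ^^ k) y" for k
  define ss where "ss k = (\<Sum>i<k. of_nat p ^ i * f (zs i))" for k
  have approx: "y = \<sigma> (ss k) + of_nat p ^ k * zs k" for k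
  proof (induction k)
    case 0
    then show ?case by (simp add: ss_def zs_def sigma.zero)
  next
    case (Suc k)
    have "of_nat p ^ k * zs k = of_nat p ^ k * (\<sigma> (f (zs k)) + of_nat p * g (zs k))"
      using fg[of "zs k"] by (rule arg_cong)
    then have "of_nat p ^ k * zs k = of_nat p ^ k * \<sigma> (f (zs k)) + of_nat p ^ Suc k * zs (Suc k)"
      by (simp add: zs_def algebra_simps)
    moreover have "\<sigma> (ss (Suc k)) = \<sigma> (ss k) + of_nat p ^ k * \<sigma> (f (zs k))"
      by (simp add: ss_def sigma.add sigma.mult sigma.power sigma.of_nat)
    ultimately show ?case
      using Suc by (simp add: algebra_simps)
  qed
  have "of_nat p ^ k dvd ss (Suc k) - ss k" for k
    by (simp add: ss_def)
  then obtain l where l: "\<And>k. of_nat p ^ k dvd l - ss k"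
    using p_adic_limit_exists by blast
  have "of_nat p ^ k dvd \<sigma> l - y" for k
  proof -
    obtain w where w: "l - ss k = of_nat p ^ k * w"
      using l[of k] by (auto simp: dvd_def)
    have "\<sigma> l - y = \<sigma> (l - ss k) - of_nat p ^ k * zs k"
      using approx[of k] by (simp add: sigma.diff algebra_simps)
    also have "\<dots> = of_nat p ^ k * (\<sigma> w - zs k)"
      using w by (simp add: sigma.mult sigma.power sigma.of_nat algebra_simps)
    finally show ?thesis
      by simp
  qed
  then have "y = \<sigma> l"
    using eq_0_if_dvd_all_powers[of "\<sigma> l - y"] by simp
  then show "\<exists>x. y = \<sigma> x" ..
qed

lemma sigma_bij: "bij \<sigma>"
  using sigma_inj sigma_surj by (rule bijI)

sublocale sigma_inv: ring_homomorphism "inv \<sigma>"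
  using sigma_bij by (rule sigma.inv_ring_homomorphism)

lemma inv_sigma_eq_sigma: "\<sigma> (\<sigma> x) = x \<Longrightarrow> inv \<sigma> x = \<sigma> x"
  by (metis sigma_inj inv_f_f)

lemma sigma_teichmuller:
  assumes "n \<ge> 1" and "a ^ p ^ n = a"
  shows "\<sigma> (teichmuller n a) = teichmuller n (a ^ p)"
proof -
  have "\<sigma> (teichmuller n a) ^ p ^ n = \<sigma> (teichmuller n a)"
    using teichmuller_power_fixed[OF assms] by (metis sigma.power)
  with assms(1) have "teichmuller n (red (\<sigma> (teichmuller n a))) = \<sigma> (teichmuller n a)"
    by (rule teichmuller_unique)
  then show ?thesis
    using red_teichmuller[OF assms] by (simp add: red_sigma)
qed

lemma sigma_sigma_teichmuller:
  assumes "a ^ p\<^sup>2 = a"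
  shows "\<sigma> (\<sigma> (teichmuller 2 a)) = teichmuller 2 a"
proof -
  have "(a ^ p) ^ p\<^sup>2 = a ^ p"
    using assms by (metis power_mult mult.commute)
  moreover have "(a ^ p) ^ p = a"
    using assms by (simp add: power_mult[symmetric] power2_eq_square)
  ultimately show ?thesis
    using assms by (simp add: sigma_teichmuller)
qed

lemma teichmuller_inverse:
  assumes "a ^ p\<^sup>2 = a" and "a \<noteq> 0"
  shows "teichmuller 2 a * teichmuller 2 (inverse a) = 1"
proof -
  have "inverse a ^ p\<^sup>2 = inverse a"
    using assms(1) by (metis power_inverse)
  then have "teichmuller 2 a * teichmuller 2 (inverse a) = teichmuller 2 (a * inverse a)"
    using assms(1) by (simp add: teichmuller_mult)
  then show ?thesis
    using assms(2) by (simp add: teichmuller_one)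
qed

lemma exists_sl2_lift:
  assumes "a ^ p\<^sup>2 = a" and "b ^ p\<^sup>2 = b" and "c ^ p\<^sup>2 = c" and "d ^ p\<^sup>2 = d"
    and "a * d - b * c = 1"
  shows "\<exists>A B C D. \<sigma> (\<sigma> A) = A \<and> \<sigma> (\<sigma> B) = B \<and> \<sigma> (\<sigma> C) = C \<and> \<sigma> (\<sigma> D) = D \<and>
    A * D - B * C = 1 \<and> red A = a \<and> red B = b \<and> red C = c \<and> red D = d"
proof -
  let ?T = "teichmuller 2"
  have T: "\<sigma> (\<sigma> (?T x)) = ?T x" "red (?T x) = x" if "x ^ p\<^sup>2 = x" for x
    using that by (simp_all add: sigma_sigma_teichmuller red_teichmuller)
  have T_inv: "\<sigma> (\<sigma> (?T (inverse x))) = ?T (inverse x)" "red (?T (inverse x)) = inverse x"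
    if "x ^ p\<^sup>2 = x" for x
    using that T[of "inverse x"] by (simp_all add: power_inverse)
  show ?thesis
  proof (cases "a = 0")
    case False
    define D where "D = ?T (inverse a) * (1 + ?T b * ?T c)"
    have "red D = inverse a * (1 + b * c)"
      using assms by (simp add: D_def T T_inv red.mult red.add red.one)
    also have "1 + b * c = a * d"
      using assms(5) by (simp add: algebra_simps)
    also have "inverse a * (a * d) = d"
      using False by simp
    finally have "red D = d" .
    moreover have "\<sigma> (\<sigma> D) = D"
      unfolding D_def using assms by (simp add: T T_inv sigma.mult sigma.add sigma.one)
    moreover have "?T a * D = (?T a * ?T (inverse a)) * (1 + ?T b * ?T c)"
      by (simp add: D_def mult.assoc)
    then have "?T a * D - ?T b * ?T c = 1"
      using teichmuller_inverse[OF assms(1) False] by simp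
    ultimately show ?thesis
      using assms T by blast
  next
    case True
    with assms(5) have "b \<noteq> 0"
      by auto
    define C where "C = ?T (inverse b) * (?T a * ?T d - 1)"
    have "red C = inverse b * (a * d - 1)"
      using assms by (simp add: C_def T T_inv red.mult red.diff red.one)
    also have "a * d - 1 = b * c"
      using assms(5) by (simp add: algebra_simps)
    also have "inverse b * (b * c) = c"
      using \<open>b \<noteq> 0\<close> by simp
    finally have "red C = c" .
    moreover have "\<sigma> (\<sigma> C) = C"
      unfolding C_def using assms by (simp add: T T_inv sigma.mult sigma.diff sigma.one)
    moreover have "?T b * C = (?T b * ?T (inverse b)) * (?T a * ?T d - 1)"
      by (simp add: C_def mult.assoc)
    then have "?T a * ?T d - ?T b * C = 1"
      using teichmuller_inverse[OF assms(2) \<open>b \<noteq> 0\<close>] by simp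
    ultimately show ?thesis
      using assms T by blast
  qed
qed

end

definition block_mat :: "'w::comm_ring_1 \<Rightarrow> 'w \<Rightarrow> 'w \<Rightarrow> 'w \<Rightarrow> 'w \<Rightarrow> 'w \<Rightarrow> 'w \<Rightarrow> 'w \<Rightarrow> 'w mat4" where
  "block_mat A B C D A' B' C' D' = (\<lambda>i j. case i of
      I1 \<Rightarrow> (case j of I1 \<Rightarrow> A | I3 \<Rightarrow> B | _ \<Rightarrow> 0)
    | I3 \<Rightarrow> (case j of I1 \<Rightarrow> C | I3 \<Rightarrow> D | _ \<Rightarrow> 0)
    | I2 \<Rightarrow> (case j of I2 \<Rightarrow> A' | I4 \<Rightarrow> B' | _ \<Rightarrow> 0)
    | I4 \<Rightarrow> (case j of I2 \<Rightarrow> C' | I4 \<Rightarrow> D' | _ \<Rightarrow> 0))"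

lemma mat_mul_block_mat:
  "mat_mul (block_mat A B C D A' B' C' D') (block_mat E F G H E' F' G' H') =
    block_mat (A * E + B * G) (A * F + B * H) (C * E + D * G) (C * F + D * H)
      (A' * E' + B' * G') (A' * F' + B' * H') (C' * E' + D' * G') (C' * F' + D' * H')"
  unfolding mat_mul_def block_mat_def
  by (intro ext) (simp split: idx.split)

lemma mat_id_eq_block_mat: "mat_id = block_mat 1 0 0 1 1 0 0 1"
  unfolding mat_id_def block_mat_def
  by (intro ext) (simp split: idx.split)

lemma block_mat_adjugate:
  assumes "A * D - B * C = 1" and "A' * D' - B' * C' = 1"
  shows "mat_mul (block_mat A B C D A' B' C' D') (block_mat D (- B) (- C) A D' (- B') (- C') A') = mat_id"
    and "mat_mul (block_mat D (- B) (- C) A D' (- B') (- C') A') (block_mat A B C D A' B' C' D') = mat_id"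
  using assms by (simp_all add: mat_mul_block_mat mat_id_eq_block_mat algebra_simps)

lemma pairN_block_mat:
  "pairN p (mat_vec (block_mat A B C D A' B' C' D') x) (mat_vec (block_mat A B C D A' B' C' D') y) =
    (A * D - B * C) * (x I1 * y I3 - x I3 * y I1) + of_nat p * ((A' * D' - B' * C') * (x I2 * y I4 - x I4 * y I2))"
  unfolding pairN_def mat_vec_def block_mat_def by (simp add: algebra_simps)

context witt_frobenius
begin

lemma frobF_block_mat:
  assumes "\<sigma> (\<sigma> A) = A" and "\<sigma> (\<sigma> B) = B" and "\<sigma> (\<sigma> C) = C" and "\<sigma> (\<sigma> D) = D"
  shows "mat_vec (block_mat A B C D (\<sigma> A) (\<sigma> B) (\<sigma> C) (\<sigma> D)) (frobF p \<sigma> x) =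
    frobF p \<sigma> (mat_vec (block_mat A B C D (\<sigma> A) (\<sigma> B) (\<sigma> C) (\<sigma> D)) x)"
  unfolding mat_vec_def frobF_def block_mat_def
  using assms by (intro ext) (simp split: idx.split add: sigma.add sigma.mult sigma.uminus sigma.of_nat algebra_simps)

lemma verV_block_mat:
  assumes "\<sigma> (\<sigma> A) = A" and "\<sigma> (\<sigma> B) = B" and "\<sigma> (\<sigma> C) = C" and "\<sigma> (\<sigma> D) = D"
  shows "mat_vec (block_mat A B C D (\<sigma> A) (\<sigma> B) (\<sigma> C) (\<sigma> D)) (verV p \<sigma> x) =
    verV p \<sigma> (mat_vec (block_mat A B C D (\<sigma> A) (\<sigma> B) (\<sigma> C) (\<sigma> D)) x)"
  unfolding mat_vec_def verV_def block_mat_def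
  using assms by (intro ext)
    (simp split: idx.split add: inv_sigma_eq_sigma sigma_inv.add sigma_inv.mult sigma_inv.uminus
      sigma_inv.of_nat sigma_inv.zero algebra_simps)

lemma block_mat_in_U_grp:
  assumes "\<sigma> (\<sigma> A) = A" and "\<sigma> (\<sigma> B) = B" and "\<sigma> (\<sigma> C) = C" and "\<sigma> (\<sigma> D) = D"
    and "A * D - B * C = 1"
  shows "block_mat A B C D (\<sigma> A) (\<sigma> B) (\<sigma> C) (\<sigma> D) \<in> U_grp p \<sigma>"
proof -
  let ?M = "block_mat A B C D (\<sigma> A) (\<sigma> B) (\<sigma> C) (\<sigma> D)"
  have det_sigma: "\<sigma> A * \<sigma> D - \<sigma> B * \<sigma> C = 1"
    using assms(5) by (metis sigma.diff sigma.mult sigma.one)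
  have "\<exists>M'. mat_mul ?M M' = mat_id \<and> mat_mul M' ?M = mat_id"
    using block_mat_adjugate[OF assms(5) det_sigma] by blast
  moreover have "pairN p (mat_vec ?M x) (mat_vec ?M y) = pairN p x y" for x y
    unfolding pairN_block_mat assms(5) det_sigma by (simp add: pairN_def)
  ultimately show ?thesis
    unfolding U_grp_def using frobF_block_mat[OF assms(1-4)] verV_block_mat[OF assms(1-4)] by blast
qed

lemma pi_has_matrix_block_mat:
  assumes "\<sigma> (\<sigma> A) = A" and "\<sigma> (\<sigma> B) = B" and "\<sigma> (\<sigma> C) = C" and "\<sigma> (\<sigma> D) = D"
  shows "pi_has_matrix p \<sigma> red (block_mat A B C D (\<sigma> A) (\<sigma> B) (\<sigma> C) (\<sigma> D))
    (red A) (red B) (red C) (red D)"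
proof -
  let ?M = "block_mat A B C D (\<sigma> A) (\<sigma> B) (\<sigma> C) (\<sigma> D)"
  define col1 where "col1 = mat_vec ?M (basis_vec I1)"
  define col3 where "col3 = mat_vec ?M (basis_vec I3)"
  have "(\<lambda>_. 0) \<in> Ntilde p \<sigma>"
    unfolding Ntilde_def frobF_def by (auto split: idx.split simp: sigma.zero)
  moreover have "(\<lambda>_. 0) = verV p \<sigma> (\<lambda>_. 0)"
    unfolding verV_def by (auto split: idx.split simp: sigma_inv.zero)
  ultimately have zero_in_VNtilde: "vsub y y \<in> VNtilde p \<sigma>" for y
    unfolding VNtilde_def vsub_def by auto
  have "col1 \<in> Ntilde p \<sigma>" and "col3 \<in> Ntilde p \<sigma>"
    unfolding col1_def col3_def Ntilde_def frobF_def mat_vec_def block_mat_def basis_vec_def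
    using assms by (auto split: idx.split simp: sigma.zero)
  moreover have "red (col1 I1) = red A" "red (col1 I3) = red C"
    "red (col3 I1) = red B" "red (col3 I3) = red D"
    by (simp_all add: col1_def col3_def mat_vec_def block_mat_def basis_vec_def)
  ultimately show ?thesis
    unfolding pi_has_matrix_def col1_def[symmetric] col3_def[symmetric] using zero_in_VNtilde by blast
qed

end

lemma aut_V0_det:
  assumes "p > 0" and "aut_V0 p a b c d"
  shows "a * d - b * c = 1"
proof -
  have "0 \<in> Fp2 p" and "1 \<in> Fp2 p"
    using assms(1) by (simp_all add: Fp2_def)
  then have "(a * 1 + b * 0) * (c * 0 + d * 1) - (c * 1 + d * 0) * (a * 0 + b * 1) = 1 * 1 - 0 * 0"
    using assms(2) unfolding aut_V0_def by blast
  then show ?thesis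
    by (simp add: mult.commute)
qed

theorem proposition4p1:
  fixes p :: nat
    and red :: "'w::comm_ring_1 \<Rightarrow> 'k::field"
    and \<sigma> :: "'w \<Rightarrow> 'w"
  assumes "prime p"
    and "CHAR('k) = p"
    and "alg_closed_field TYPE('k)"
    and "is_witt_ring p red"
    and "is_witt_frobenius p red \<sigma>"
  shows "\<forall>a b c d. aut_V0 p a b c d \<longrightarrow>
           (\<exists>M \<in> U_grp p \<sigma>. pi_has_matrix p \<sigma> red M a b c d)"
proof (intro allI impI)
  fix a b c d :: 'k
  assume aut: "aut_V0 p a b c d"
  interpret witt_frobenius p red \<sigma>
    using assms by unfold_locales
  have "a ^ p\<^sup>2 = a" "b ^ p\<^sup>2 = b" "c ^ p\<^sup>2 = c" "d ^ p\<^sup>2 = d"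
    using aut by (simp_all add: aut_V0_def Fp2_def)
  moreover have "a * d - b * c = 1"
    using aut_V0_det[OF prime_gt_0_nat[OF prime] aut] .
  ultimately obtain A B C D where fixed: "\<sigma> (\<sigma> A) = A" "\<sigma> (\<sigma> B) = B" "\<sigma> (\<sigma> C) = C" "\<sigma> (\<sigma> D) = D"
    and det: "A * D - B * C = 1" and red: "red A = a" "red B = b" "red C = c" "red D = d"
    using exists_sl2_lift by blast
  show "\<exists>M \<in> U_grp p \<sigma>. pi_has_matrix p \<sigma> red M a b c d"
    using block_mat_in_U_grp[OF fixed det] pi_has_matrix_block_mat[OF fixed] unfolding red by blast
qed

end
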